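(* Let $r\geq 1$ and $n_1,\ldots,n_r>1$ be integers, let $R=\mathbb{Z}_{n_1}\oplus\cdots\oplus \mathbb{Z}_{n_r}$, and let $\mathcal{S}_R$ be the multiplicative semigroup of $R$, with its operation written as $+$. Let $a,b\in\mathcal{S}_R$. Then: (i) If $a \leqq_{\mathcal{H}} b$, then $\gcd(\kappa_i(\theta_b),n_i)\mid \gcd(\kappa_i(\theta_a),n_i)$ for each $i\in [1,r]$, and ${\rm St}(b)\subseteq{\rm St}(a)$. (ii) $a \ \mathcal{H} \ b$ if and only if $\gcd(\kappa_i(\theta_b),n_i)= \gcd(\kappa_i(\theta_a),n_i)$ for each $i\in [1,r]$. (iii) Suppose $a <_{\mathcal{H}} b$. If there exists an index $t\in [1,r]$ such that either ${\rm pot}_{p}(\gcd(\kappa_t(\theta_b), n_t))<{\rm pot}_{p}(\gcd(\kappa_t(\theta_a), n_t))$ for some prime $p>2$, or ${\rm pot}_2(\gcd(\kappa_t(\theta_b), n_t))<{\rm pot}_2(\gcd(\kappa_t(\theta_a), n_t))< {\rm pot}_2(n_t)$, then ${\rm St}(b)\subsetneq {\rm St}(a)$.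
   Context: The operation of $\mathcal{S}_R$ is the ring multiplication of $R$, written additively as $+$; its identity element $0_{\mathcal{S}_R}$ is $(\overline{1},\ldots,\overline{1})$, and ${\rm U}(\mathcal{S}_R)$ is its group of units (elements with an inverse under this operation). For ${\bf a}\in\mathcal{S}_R$, $\theta_{\bf a}=(a_1,\ldots,a_r)\in[1,n_1]\times\cdots\times[1,n_r]$ is the unique integer tuple with ${\bf a}=(\overline{a}_1,\ldots,\overline{a}_r)$, and $\kappa_i(\theta_{\bf a})=a_i$. For $c\in\mathcal{S}_R$, ${\rm St}(c)=\{u\in {\rm U}(\mathcal{S}_R): u+c=c\}$. Green's preorder: $a\leqq_{\mathcal{H}} b$ iff $a=b$ or $a=b+c$ for some $c\in\mathcal{S}_R$; $a\ \mathcal{H}\ b$ iff $a\leqq_{\mathcal{H}} b$ and $b\leqq_{\mathcal{H}} a$; $a<_{\mathcal{H}} b$ means $a\leqq_{\mathcal{H}} b$ but not $a\ \mathcal{H}\ b$. For a prime $p$ and nonzero integer $n$, ${\rm pot}_p(n)$ is the largest $k$ with $p^k\mid n$. *)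

theory Defs
  imports "HOL-Computational_Algebra.Computational_Algebra"
begin

text \<open>Elements of R = Z_{n_1} + ... + Z_{n_r} are represented as functions
  a :: nat => nat with a i in {0..<n i} for i in {1..r} (the residue class of a i)
  and a i = 0 outside {1..r}.\<close>

definition SR :: "nat \<Rightarrow> (nat \<Rightarrow> nat) \<Rightarrow> (nat \<Rightarrow> nat) set" where
  "SR r n = {a. (\<forall>i\<in>{1..r}. a i < n i) \<and> (\<forall>i. i \<notin> {1..r} \<longrightarrow> a i = 0)}"

definition sadd :: "nat \<Rightarrow> (nat \<Rightarrow> nat) \<Rightarrow> (nat \<Rightarrow> nat) \<Rightarrow> (nat \<Rightarrow> nat) \<Rightarrow> (nat \<Rightarrow> nat)" where
  "sadd r n a b = (\<lambda>i. if i \<in> {1..r} then (a i * b i) mod n i else 0)"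

definition szero :: "nat \<Rightarrow> (nat \<Rightarrow> nat) \<Rightarrow> (nat \<Rightarrow> nat)" where
  "szero r n = (\<lambda>i. if i \<in> {1..r} then 1 mod n i else 0)"

definition SUnits :: "nat \<Rightarrow> (nat \<Rightarrow> nat) \<Rightarrow> (nat \<Rightarrow> nat) set" where
  "SUnits r n = {u \<in> SR r n. \<exists>v \<in> SR r n. sadd r n u v = szero r n \<and> sadd r n v u = szero r n}"

definition St :: "nat \<Rightarrow> (nat \<Rightarrow> nat) \<Rightarrow> (nat \<Rightarrow> nat) \<Rightarrow> (nat \<Rightarrow> nat) set" where
  "St r n c = {u \<in> SUnits r n. sadd r n u c = c}"

definition Hleq :: "nat \<Rightarrow> (nat \<Rightarrow> nat) \<Rightarrow> (nat \<Rightarrow> nat) \<Rightarrow> (nat \<Rightarrow> nat) \<Rightarrow> bool" where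
  "Hleq r n a b \<longleftrightarrow> a = b \<or> (\<exists>c \<in> SR r n. a = sadd r n b c)"

definition Hrel :: "nat \<Rightarrow> (nat \<Rightarrow> nat) \<Rightarrow> (nat \<Rightarrow> nat) \<Rightarrow> (nat \<Rightarrow> nat) \<Rightarrow> bool" where
  "Hrel r n a b \<longleftrightarrow> Hleq r n a b \<and> Hleq r n b a"

definition Hless :: "nat \<Rightarrow> (nat \<Rightarrow> nat) \<Rightarrow> (nat \<Rightarrow> nat) \<Rightarrow> (nat \<Rightarrow> nat) \<Rightarrow> bool" where
  "Hless r n a b \<longleftrightarrow> Hleq r n a b \<and> \<not> Hrel r n a b"

text \<open>theta: the unique representative tuple in [1,n_1] x ... x [1,n_r];
  kappa_i(theta a) = theta n a i.\<close>
definition theta :: "(nat \<Rightarrow> nat) \<Rightarrow> (nat \<Rightarrow> nat) \<Rightarrow> nat \<Rightarrow> nat" where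
  "theta n a i = (if a i = 0 then n i else a i)"

definition pot :: "nat \<Rightarrow> nat \<Rightarrow> nat" where
  "pot p m = multiplicity p m"

end

theory Submission
  imports Defs "HOL-Number_Theory.Cong"
begin

text \<open>Everything happens coordinatewise. In \<open>\<int>/n\<close>, \<open>x\<close> is a multiple of \<open>y\<close> iff
  \<open>gcd y n\<close> divides \<open>x\<close>, and a unit \<open>1 + w\<close> fixes \<open>x\<close> iff \<open>n\<close> divides \<open>gcd x n * w\<close>.
  So \<open>St b \<subset> St a\<close> is witnessed by a unit that is \<open>1 + w\<close> in one coordinate and \<open>1\<close>
  elsewhere, where \<open>n\<close> divides \<open>gcd a n * w\<close> but not \<open>gcd b n * w\<close>. If the prime \<open>p\<close>
  occurs in \<open>gcd b n\<close> with exponent \<open>\<beta>\<close> smaller than its exponent in \<open>gcd a n\<close>, and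
  \<open>n = p ^ e * n'\<close> with \<open>p\<close> not dividing \<open>n'\<close>, take \<open>w = p ^ (e - \<beta> - 1) * n' * s\<close>.
  Then \<open>1 + w\<close> is prime to \<open>n'\<close>, and also to \<open>p\<close> when \<open>e - \<beta> - 1 > 0\<close>; otherwise the
  hypotheses force \<open>p > 2\<close>, and one of \<open>s = 1\<close>, \<open>s = 2\<close> makes \<open>1 + n' * s\<close> prime to \<open>p\<close>.\<close>

lemma dvd_gcd_mult_iff:
  fixes n x w :: nat
  shows "n dvd gcd x n * w \<longleftrightarrow> n dvd x * w"
proof
  assume "n dvd gcd x n * w"
  then show "n dvd x * w"
    by (rule dvd_trans) simp
next
  assume "n dvd x * w"
  then have "n dvd gcd (x * w) (n * w)"
    by simp
  also have "gcd (x * w) (n * w) = gcd x n * w"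
    by (metis gcd_mult_distrib_nat mult.commute)
  finally show "n dvd gcd x n * w" .
qed

lemma mod_mult_Suc_eq_self_iff:
  fixes n x w :: nat
  assumes "x < n"
  shows "(Suc w mod n * x) mod n = x \<longleftrightarrow> n dvd x * w"
proof -
  have "(Suc w mod n * x) mod n = (Suc w * x) mod n"
    by (rule mod_mult_left_eq)
  also have "\<dots> = (x + x * w) mod n"
    by (simp add: algebra_simps)
  finally have "(Suc w mod n * x) mod n = (x + x * w) mod n" .
  then have "(Suc w mod n * x) mod n = x \<longleftrightarrow> [x + x * w = x] (mod n)"
    using assms by (simp add: cong_def)
  also have "\<dots> \<longleftrightarrow> n dvd x * w"
    by (simp add: cong_add_lcancel_0_nat cong_0_iff)
  finally show ?thesis .
qed

lemma exists_mult_mod_eq: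
  fixes n x y :: nat
  assumes "x < n" and "gcd y n dvd x"
  shows "\<exists>c<n. (y * c) mod n = x"
proof -
  obtain c where "[y * c = x] (mod n)"
    using cong_solve_dvd_nat[OF assms(2)] by blast
  then have "(y * (c mod n)) mod n = x"
    using assms(1) by (simp add: cong_def mod_mult_right_eq)
  moreover have "c mod n < n"
    using assms(1) by simp
  ultimately show ?thesis
    by blast
qed

lemma exists_not_dvd_Suc_power_mult:
  fixes p m k :: nat
  assumes p: "prime p" and "\<not> p dvd m" and "k > 0 \<or> p > 2"
  shows "\<exists>s. \<not> p dvd s \<and> \<not> p dvd Suc (p ^ k * m * s)"
proof (cases "k > 0")
  case True
  then have "p dvd p ^ k * m * 1"
    by (simp add: dvd_power)
  then have "\<not> p dvd Suc (p ^ k * m * 1)"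
    using p by (metis Suc_eq_plus1 dvd_add_right_iff not_prime_unit nat_dvd_1_iff_1)
  then show ?thesis
    using p by (metis nat_dvd_1_iff_1 not_prime_1)
next
  case False
  then have "k = 0" and p2: "p > 2"
    using assms(3) by auto
  show ?thesis
  proof (cases "p dvd Suc m")
    case True
    have "\<not> p dvd Suc (2 * m)"
    proof
      assume "p dvd Suc (2 * m)"
      then have "p dvd Suc (2 * m) - Suc m"
        using True by (rule dvd_diff_nat)
      then show False
        using \<open>\<not> p dvd m\<close> by simp
    qed
    moreover have "\<not> p dvd 2"
      using p2 by (auto dest: dvd_imp_le)
    ultimately show ?thesis
      using \<open>k = 0\<close> by (metis mult.commute mult_1 power_0)
  next
    case False
    then show ?thesis
      using \<open>k = 0\<close> p by (metis mult_1 mult_1_right nat_dvd_1_iff_1 not_prime_1 power_0)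
  qed
qed

lemma exists_coprime_Suc_separating:
  fixes n ga gb p :: nat
  assumes n: "n > 0" and "ga dvd n" and "gb dvd n" and p: "prime p"
    and lt: "multiplicity p gb < multiplicity p ga"
    and p2: "p > 2 \<or> multiplicity p ga < multiplicity p n"
  shows "\<exists>w. n dvd ga * w \<and> \<not> n dvd gb * w \<and> coprime (Suc w) n"
proof -
  define e where "e = multiplicity p n"
  define \<alpha> where "\<alpha> = multiplicity p ga"
  define \<beta> where "\<beta> = multiplicity p gb"
  define k where "k = e - \<beta> - 1"
  have nu: "\<not> is_unit p"
    using p not_prime_unit by blast
  obtain n' where n': "n = p ^ e * n'" "\<not> p dvd n'"
    using multiplicity_decompose'[of n p] e_def nu n by (metis not_gr0)
  have "\<alpha> \<le> e"
    unfolding \<alpha>_def e_def using \<open>ga dvd n\<close> n by (simp add: dvd_imp_multiplicity_le)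
  have "\<beta> < \<alpha>"
    using lt by (simp add: \<alpha>_def \<beta>_def)
  have "k > 0 \<or> p > 2"
    using p2 \<open>\<beta> < \<alpha>\<close> by (auto simp: k_def \<alpha>_def e_def)
  then obtain s where s: "\<not> p dvd s" "\<not> p dvd Suc (p ^ k * n' * s)"
    using exists_not_dvd_Suc_power_mult[OF p n'(2)] by blast
  define w where "w = p ^ k * n' * s"
  have "p ^ e dvd ga * w"
  proof -
    have "p ^ \<alpha> * p ^ k dvd ga * w"
      unfolding w_def \<alpha>_def by (intro mult_dvd_mono) (simp_all add: multiplicity_dvd)
    moreover have "p ^ e dvd p ^ \<alpha> * p ^ k"
      using \<open>\<alpha> \<le> e\<close> \<open>\<beta> < \<alpha>\<close> by (simp add: k_def flip: power_add) (rule le_imp_power_dvd; simp)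
    ultimately show ?thesis
      by (rule dvd_trans[rotated])
  qed
  moreover have "n' dvd ga * w"
    by (simp add: w_def)
  moreover have "coprime (p ^ e) n'"
    using p n'(2) by (simp add: prime_imp_coprime_nat)
  ultimately have "n dvd ga * w"
    using n'(1) by (simp add: divides_mult)
  moreover have "\<not> n dvd gb * w"
  proof
    obtain z where z: "gb = p ^ \<beta> * z" "\<not> p dvd z"
      using multiplicity_decompose'[of gb p] \<beta>_def nu \<open>gb dvd n\<close> n by (metis dvd_0_left_iff not_gr0)
    have "gb * w = p ^ (e - 1) * (z * n' * s)"
      using \<open>\<alpha> \<le> e\<close> \<open>\<beta> < \<alpha>\<close>
      by (simp add: z w_def k_def ac_simps flip: power_add)
    moreover assume "n dvd gb * w"
    ultimately have "p ^ (e - 1) * p dvd p ^ (e - 1) * (z * n' * s)"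
      using \<open>\<alpha> \<le> e\<close> \<open>\<beta> < \<alpha>\<close> n'(1)
      by (metis Suc_diff_1 dvd_mult_left gr_zeroI less_le_trans not_less0 power_Suc2)
    then have "p dvd z * n' * s"
      using p by (simp add: prime_gt_0_nat)
    then show False
      using p z(2) n'(2) s(1) by (simp add: prime_dvd_mult_iff)
  qed
  moreover have "coprime (Suc w) n"
  proof -
    have "coprime (Suc w) n'"
    proof (rule coprimeI)
      fix d assume "d dvd Suc w" "d dvd n'"
      then have "d dvd w"
        by (simp add: w_def)
      with \<open>d dvd Suc w\<close> show "is_unit d"
        by (metis Suc_eq_plus1 dvd_add_right_iff)
    qed
    moreover have "coprime p (Suc w)"
      using s(2) p by (simp add: w_def prime_imp_coprime)
    then have "coprime (Suc w) (p ^ e)"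
      by (simp add: coprime_commute)
    ultimately show ?thesis
      using n'(1) by simp
  qed
  ultimately show ?thesis
    by blast
qed

lemma SR_less: "x \<in> SR r n \<Longrightarrow> i \<in> {1..r} \<Longrightarrow> x i < n i"
  and SR_outside: "x \<in> SR r n \<Longrightarrow> i \<notin> {1..r} \<Longrightarrow> x i = 0"
  by (auto simp: SR_def)

lemma restrict_in_SR: "(\<forall>i\<in>{1..r}. f i < n i) \<Longrightarrow> (\<lambda>i. if i \<in> {1..r} then f i else 0) \<in> SR r n"
  by (simp add: SR_def)

lemma sadd_commute: "sadd r n u v = sadd r n v u"
  unfolding sadd_def by (metis mult.commute)

lemma sadd_assoc: "sadd r n u (sadd r n v w) = sadd r n (sadd r n u v) w"
  by (simp add: sadd_def fun_eq_iff mod_mult_right_eq mod_mult_left_eq mult.assoc)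

lemma gcd_theta: "gcd (theta n a i) (n i) = gcd (a i) (n i)"
  by (simp add: theta_def)

lemma Hleq_iff_gcd_dvd:
  assumes a: "a \<in> SR r n" and b: "b \<in> SR r n"
  shows "Hleq r n a b \<longleftrightarrow> (\<forall>i\<in>{1..r}. gcd (b i) (n i) dvd gcd (a i) (n i))"
proof
  assume "Hleq r n a b"
  then show "\<forall>i\<in>{1..r}. gcd (b i) (n i) dvd gcd (a i) (n i)"
    by (auto simp: Hleq_def sadd_def dvd_mod)
next
  assume "\<forall>i\<in>{1..r}. gcd (b i) (n i) dvd gcd (a i) (n i)"
  then have "\<forall>i\<in>{1..r}. \<exists>c<n i. (b i * c) mod n i = a i"
    using a by (metis SR_less dvd_trans exists_mult_mod_eq gcd_dvd1)
  then obtain f where f: "\<forall>i\<in>{1..r}. f i < n i \<and> (b i * f i) mod n i = a i"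
    by metis
  define c where "c = (\<lambda>i. if i \<in> {1..r} then f i else 0)"
  have "c \<in> SR r n"
    unfolding c_def using f by (intro restrict_in_SR) blast
  moreover have "a = sadd r n b c"
    using f a by (auto simp: fun_eq_iff sadd_def c_def SR_outside)
  ultimately show "Hleq r n a b"
    by (auto simp: Hleq_def)
qed

lemma St_antimono:
  assumes "Hleq r n a b"
  shows "St r n b \<subseteq> St r n a"
  using assms by (auto simp: Hleq_def St_def sadd_assoc)

lemma coprime_coords_in_SUnits:
  assumes u: "u \<in> SR r n" and cop: "\<forall>i\<in>{1..r}. coprime (u i) (n i)"
  shows "u \<in> SUnits r n"
proof -
  have "\<forall>i\<in>{1..r}. \<exists>x. [u i * x = Suc 0] (mod n i)"
    using cop cong_solve_coprime_nat by blast
  then obtain f where f: "\<forall>i\<in>{1..r}. [u i * f i = Suc 0] (mod n i)"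
    by (rule bchoice[THEN exE])
  define v where "v = (\<lambda>i. if i \<in> {1..r} then f i mod n i else 0)"
  have "v \<in> SR r n"
    unfolding v_def using u by (intro restrict_in_SR) (auto dest: SR_less)
  moreover have "sadd r n u v = szero r n"
    using f by (auto simp: fun_eq_iff sadd_def szero_def v_def cong_def mod_mult_right_eq)
  ultimately show ?thesis
    using u by (auto simp: SUnits_def sadd_commute[of r n v u])
qed

lemma shift_in_St_iff:
  assumes c: "c \<in> SR r n" and t: "t \<in> {1..r}" and "coprime (Suc w) (n t)"
  shows "(szero r n)(t := Suc w mod n t) \<in> St r n c \<longleftrightarrow> n t dvd gcd (c t) (n t) * w"
proof -
  define u where "u = (szero r n)(t := Suc w mod n t)"
  have pos: "n i > 0" if "i \<in> {1..r}" for i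
    using SR_less[OF c that] by simp
  have "u i < n i" if "i \<in> {1..r}" for i
    using pos[OF that] by (auto simp: u_def szero_def)
  with t have "u \<in> SR r n"
    by (auto simp: SR_def u_def szero_def)
  moreover have "coprime (u i) (n i)" if "i \<in> {1..r}" for i
    using that pos[OF that] pos[OF t] \<open>coprime (Suc w) (n t)\<close> by (auto simp: u_def szero_def)
  ultimately have "u \<in> SUnits r n"
    by (blast intro: coprime_coords_in_SUnits)
  have "sadd r n u c i = c i" if "i \<noteq> t" for i
    using that SR_less[OF c, of i] SR_outside[OF c, of i]
    by (auto simp: sadd_def u_def szero_def mod_mult_left_eq)
  then have "sadd r n u c = c \<longleftrightarrow> sadd r n u c t = c t"
    by (metis ext)
  also have "\<dots> \<longleftrightarrow> n t dvd c t * w"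
    using t SR_less[OF c t] by (simp add: sadd_def u_def mod_mult_Suc_eq_self_iff)
  finally show ?thesis
    using \<open>u \<in> SUnits r n\<close> by (simp add: St_def u_def dvd_gcd_mult_iff)
qed

(* The moduli are positive because a i < n i. *)
theorem lemma2p2:
  fixes r :: nat and n :: "nat \<Rightarrow> nat" and a b :: "nat \<Rightarrow> nat"
  assumes "r \<ge> 1" and "\<forall>i\<in>{1..r}. n i > 1"
    and "a \<in> SR r n" and "b \<in> SR r n"
  shows "(Hleq r n a b \<longrightarrow>
            (\<forall>i\<in>{1..r}. gcd (theta n b i) (n i) dvd gcd (theta n a i) (n i))
            \<and> St r n b \<subseteq> St r n a)
     \<and> (Hrel r n a b \<longleftrightarrow>
            (\<forall>i\<in>{1..r}. gcd (theta n b i) (n i) = gcd (theta n a i) (n i)))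
     \<and> (Hless r n a b \<longrightarrow>
          (\<exists>t\<in>{1..r}.
              (\<exists>p. prime p \<and> p > 2 \<and>
                   pot p (gcd (theta n b t) (n t)) < pot p (gcd (theta n a t) (n t)))
            \<or> (pot 2 (gcd (theta n b t) (n t)) < pot 2 (gcd (theta n a t) (n t))
               \<and> pot 2 (gcd (theta n a t) (n t)) < pot 2 (n t)))
          \<longrightarrow> St r n b \<subset> St r n a)"
  unfolding gcd_theta pot_def
proof (intro conjI impI)
  note a = \<open>a \<in> SR r n\<close> and b = \<open>b \<in> SR r n\<close>
  show "Hleq r n a b \<Longrightarrow> \<forall>i\<in>{1..r}. gcd (b i) (n i) dvd gcd (a i) (n i)"
    using Hleq_iff_gcd_dvd[OF a b] by blast
  show "Hleq r n a b \<Longrightarrow> St r n b \<subseteq> St r n a"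
    by (rule St_antimono)
  show "Hrel r n a b \<longleftrightarrow> (\<forall>i\<in>{1..r}. gcd (b i) (n i) = gcd (a i) (n i))"
    unfolding Hrel_def Hleq_iff_gcd_dvd[OF a b] Hleq_iff_gcd_dvd[OF b a]
    by (metis dvd_antisym dvd_refl)
  assume "Hless r n a b"
  then have sub: "St r n b \<subseteq> St r n a"
    by (simp add: Hless_def St_antimono)
  let ?g = "\<lambda>x t. gcd (x t) (n t)"
  assume "\<exists>t\<in>{1..r}. (\<exists>p. prime p \<and> p > 2 \<and> multiplicity p (?g b t) < multiplicity p (?g a t))
      \<or> (multiplicity 2 (?g b t) < multiplicity 2 (?g a t)
         \<and> multiplicity 2 (?g a t) < multiplicity 2 (n t))"
  then obtain t p where t: "t \<in> {1..r}" and "prime p"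
    and "multiplicity p (?g b t) < multiplicity p (?g a t)"
    and "p > 2 \<or> multiplicity p (?g a t) < multiplicity p (n t)"
    using two_is_prime_nat by blast
  moreover have "n t > 0"
    using SR_less[OF a t] by simp
  ultimately obtain w where "n t dvd ?g a t * w" "\<not> n t dvd ?g b t * w" "coprime (Suc w) (n t)"
    using exists_coprime_Suc_separating[of "n t" "?g a t" "?g b t" p] by auto
  then have "(szero r n)(t := Suc w mod n t) \<in> St r n a - St r n b"
    using shift_in_St_iff[OF a t] shift_in_St_iff[OF b t] by blast
  with sub show "St r n b \<subset> St r n a"
    by blast
qed

end
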